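(* Let $N$ be an indecomposable $n$-dimensional two-step nilpotent Lie algebra over $\mathbb{C}$, and let its center have dimension $p$. Then \[ 1 \le p \le n + \tfrac{1}{2} - \sqrt{2n + \tfrac{1}{4}}. \]
   Context: A two-step nilpotent Lie algebra is a non-abelian Lie algebra $N$ with $[N,[N,N]]=0$. A Lie algebra is decomposable if it is a direct sum of two nonzero ideals, and indecomposable otherwise. *)

theory Defs
  imports "HOL-Analysis.Analysis"
begin

text \<open>An n-dimensional complex Lie algebra is modelled (up to isomorphism) as the
  vector space complex^'n (n = CARD('n)) with a bracket operation br.\<close>

definition lie_algebra :: "(complex^'n \<Rightarrow> complex^'n \<Rightarrow> complex^'n) \<Rightarrow> bool" where
  "lie_algebra br \<longleftrightarrow>
     (\<forall>a b x y z. br (a *s x + b *s y) z = a *s br x z + b *s br y z) \<and>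
     (\<forall>a b x y z. br z (a *s x + b *s y) = a *s br z x + b *s br z y) \<and>
     (\<forall>x. br x x = 0) \<and>
     (\<forall>x y z. br x (br y z) + br y (br z x) + br z (br x y) = 0)"

definition two_step_nilpotent :: "(complex^'n \<Rightarrow> complex^'n \<Rightarrow> complex^'n) \<Rightarrow> bool" where
  "two_step_nilpotent br \<longleftrightarrow> lie_algebra br \<and>
     (\<exists>x y. br x y \<noteq> 0) \<and> (\<forall>x y z. br x (br y z) = 0)"

definition lie_center :: "(complex^'n \<Rightarrow> complex^'n \<Rightarrow> complex^'n) \<Rightarrow> (complex^'n) set" where
  "lie_center br = {z. \<forall>x. br z x = 0}"

definition lie_ideal :: "(complex^'n \<Rightarrow> complex^'n \<Rightarrow> complex^'n) \<Rightarrow> (complex^'n) set \<Rightarrow> bool" where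
  "lie_ideal br I \<longleftrightarrow> vec.subspace I \<and> (\<forall>x y. y \<in> I \<longrightarrow> br x y \<in> I)"

definition lie_decomposable :: "(complex^'n \<Rightarrow> complex^'n \<Rightarrow> complex^'n) \<Rightarrow> bool" where
  "lie_decomposable br \<longleftrightarrow> (\<exists>I J. lie_ideal br I \<and> lie_ideal br J \<and>
     I \<noteq> {0} \<and> J \<noteq> {0} \<and> I \<inter> J = {0} \<and> vec.span (I \<union> J) = UNIV)"

end

theory Submission
  imports Defs
begin

(* The derived algebra D = [N,N] lies in the centre Z because N is two-step nilpotent, and it is
   nonzero because N is not abelian. Conversely, a central vector z outside D would split off:
   the line through z is an ideal, and so is any hyperplane H containing D and avoiding z, whence
   N = <z> (+) H. So Z = D and p >= 1. If W spans a complement of Z, then |W| = n - p =: q and D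
   is spanned by the q(q-1)/2 brackets [w_i, w_j] with i < j, so 2p <= q(q-1); solving this
   quadratic inequality for p gives the bound. *)

context vector_space
begin

lemma obtain_hyperplane_avoiding:
  assumes "subspace V" and "z \<notin> V"
  obtains H where "subspace H" "V \<subseteq> H" "span {z} \<inter> H = {0}" "span (span {z} \<union> H) = UNIV"
proof -
  obtain B where B: "B \<subseteq> V" "independent B" "V \<subseteq> span B"
    using basis_exists by blast
  have "z \<notin> span B"
    using B(1) assms span_minimal by blast
  then have indep: "independent (insert z B)"
    using B(2) by (rule independent_insertI)
  define E where "E = extend_basis (insert z B)"
  have E: "insert z B \<subseteq> E" "independent E" "span E = UNIV"
    using extend_basis_superset[OF indep] independent_extend_basis[OF indep] span_extend_basis[OF indep]
    unfolding E_def by blast+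
  define H where "H = span (E - {z})"
  have "z \<notin> H"
    using E(1,2) unfolding H_def dependent_def by blast
  have "subspace H"
    unfolding H_def by (rule subspace_span)
  moreover have "V \<subseteq> H"
  proof -
    have "z \<notin> B"
      using \<open>z \<notin> span B\<close> span_base[of z B] by blast
    then have "B \<subseteq> E - {z}"
      using E(1) by blast
    then show ?thesis
      using B(3) span_mono unfolding H_def by blast
  qed
  moreover have "span {z} \<inter> H = {0}"
  proof -
    have "c *s z = 0" if "c *s z \<in> H" for c
    proof (rule ccontr)
      assume "c *s z \<noteq> 0"
      then have "z = inverse c *s c *s z"
        by simp
      also have "\<dots> \<in> H"
        using that unfolding H_def by (rule span_scale)
      finally show False
        using \<open>z \<notin> H\<close> by blast
    qed
    then show ?thesis
      using \<open>subspace H\<close> span_zero[of "{z}"] by (auto simp: span_singleton subspace_0)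
  qed
  moreover have "span (span {z} \<union> H) = UNIV"
  proof -
    have "E \<subseteq> span {z} \<union> H"
      using span_superset[of "{z}"] span_superset[of "E - {z}"] unfolding H_def by blast
    then have "span E \<subseteq> span (span {z} \<union> H)"
      by (rule span_mono)
    with E(3) show ?thesis
      by blast
  qed
  ultimately show ?thesis
    by (rule that)
qed

end

context finite_dimensional_vector_space
begin

lemma obtain_spanning_complement:
  assumes "subspace V"
  obtains W where "finite W" "card W = dim UNIV - dim V" "span (W \<union> V) = UNIV"
proof -
  obtain C where C: "C \<subseteq> V" "independent C" "card C = dim V"
    using basis_exists by blast
  define E where "E = extend_basis C"
  have E: "C \<subseteq> E" "independent E" "span E = UNIV"
    using extend_basis_superset[OF C(2)] independent_extend_basis[OF C(2)] span_extend_basis[OF C(2)]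
    unfolding E_def by blast+
  have "finite E"
    using E(2) by (rule finiteI_independent)
  have "card E = dim UNIV"
    using dim_span_eq_card_independent[OF E(2)] E(3) by simp
  have "card (E - C) = dim UNIV - dim V"
    using C(3) E(1) \<open>card E = dim UNIV\<close> \<open>finite E\<close> by (simp add: card_Diff_subset finite_subset)
  moreover have "span ((E - C) \<union> V) = UNIV"
    using E(3) C(1) span_mono[of E "(E - C) \<union> V"] by blast
  ultimately show ?thesis
    using that \<open>finite E\<close> by blast
qed

end

definition lie_derived :: "(complex^'n \<Rightarrow> complex^'n \<Rightarrow> complex^'n) \<Rightarrow> (complex^'n) set" where
  "lie_derived br = vec.span {br x y | x y. True}"

lemma subspace_lie_derived: "vec.subspace (lie_derived br)"
  unfolding lie_derived_def by (rule vec.subspace_span)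

locale complex_lie_algebra =
  fixes br :: "complex^'n \<Rightarrow> complex^'n \<Rightarrow> complex^'n"
  assumes lie_algebra: "lie_algebra br"
begin

lemma bracket_add_left: "br (x + y) z = br x z + br y z"
  using lie_algebra unfolding lie_algebra_def by (metis vector_smult_lid)

lemma bracket_add_right: "br z (x + y) = br z x + br z y"
  using lie_algebra unfolding lie_algebra_def by (metis vector_smult_lid)

lemma bracket_scale_left: "br (c *s x) z = c *s br x z"
  using lie_algebra unfolding lie_algebra_def by (metis add.right_neutral vector_smult_lzero)

lemma bracket_scale_right: "br z (c *s x) = c *s br z x"
  using lie_algebra unfolding lie_algebra_def by (metis add.right_neutral vector_smult_lzero)

lemma bracket_zero_left [simp]: "br 0 z = 0"
  by (metis bracket_scale_left vector_smult_lzero)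

lemma bracket_zero_right [simp]: "br z 0 = 0"
  by (metis bracket_scale_right vector_smult_lzero)

lemma bracket_self [simp]: "br x x = 0"
  using lie_algebra unfolding lie_algebra_def by blast

lemma bracket_antisym: "br x y = - br y x"
proof -
  have "br x y + br y x = br (x + y) (x + y)"
    unfolding bracket_add_left bracket_add_right by simp
  also have "\<dots> = 0"
    by simp
  finally show ?thesis
    by (simp add: eq_neg_iff_add_eq_0)
qed

lemma bracket_in_span_brackets:
  assumes "x \<in> vec.span A" and "y \<in> vec.span B"
  shows "br x y \<in> vec.span {br a b | a b. a \<in> A \<and> b \<in> B}"
proof -
  let ?T = "vec.span {br a b | a b. a \<in> A \<and> b \<in> B}"
  have left: "br a y \<in> ?T" if "a \<in> A" for a
    using \<open>y \<in> vec.span B\<close>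
  proof (induction rule: vec.span_induct)
    case base
    show ?case
      by (auto simp: vec.subspace_def bracket_add_right bracket_scale_right
          intro: vec.span_add vec.span_scale vec.span_zero)
  qed (use that in \<open>auto intro: vec.span_base\<close>)
  show ?thesis
    using \<open>x \<in> vec.span A\<close>
  proof (induction rule: vec.span_induct)
    case base
    show ?case
      by (auto simp: vec.subspace_def bracket_add_left bracket_scale_left
          intro: vec.span_add vec.span_scale vec.span_zero)
  qed (rule left)
qed

lemma lie_center_bracket_left: "z \<in> lie_center br \<Longrightarrow> br z x = 0"
  by (simp add: lie_center_def)

lemma lie_center_bracket_right: "z \<in> lie_center br \<Longrightarrow> br x z = 0"
  by (metis bracket_antisym lie_center_bracket_left neg_0_equal_iff_equal)

lemma subspace_lie_center: "vec.subspace (lie_center br)"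
  by (simp add: vec.subspace_def lie_center_def bracket_add_left bracket_scale_left)

lemma bracket_in_lie_derived: "br x y \<in> lie_derived br"
  unfolding lie_derived_def by (rule vec.span_base) blast

lemma lie_derived_subset_lie_center:
  assumes "\<And>x y z. br x (br y z) = 0"
  shows "lie_derived br \<subseteq> lie_center br"
  unfolding lie_derived_def
proof (rule vec.span_minimal[OF _ subspace_lie_center], safe)
  fix x y
  have "br (br x y) w = 0" for w
    using bracket_antisym[of "br x y" w] assms[of w x y] by simp
  then show "br x y \<in> lie_center br"
    by (simp add: lie_center_def)
qed

lemma lie_ideal_if_subset_lie_center:
  "vec.subspace U \<Longrightarrow> U \<subseteq> lie_center br \<Longrightarrow> lie_ideal br U"
  by (auto simp: lie_ideal_def lie_center_bracket_right vec.subspace_0)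

lemma lie_ideal_if_lie_derived_subset:
  "vec.subspace U \<Longrightarrow> lie_derived br \<subseteq> U \<Longrightarrow> lie_ideal br U"
  using bracket_in_lie_derived by (auto simp: lie_ideal_def)

lemma lie_center_subset_lie_derived_if_indecomposable:
  assumes "lie_derived br \<noteq> {0}" and "\<not> lie_decomposable br"
  shows "lie_center br \<subseteq> lie_derived br"
proof
  fix z
  assume z: "z \<in> lie_center br"
  show "z \<in> lie_derived br"
  proof (rule ccontr)
    assume "z \<notin> lie_derived br"
    then obtain H where H: "vec.subspace H" "lie_derived br \<subseteq> H"
        "vec.span {z} \<inter> H = {0}" "vec.span (vec.span {z} \<union> H) = UNIV"
      by (rule vec.obtain_hyperplane_avoiding[OF subspace_lie_derived])
    have "z \<noteq> 0"
      using \<open>z \<notin> lie_derived br\<close> vec.subspace_0[OF subspace_lie_derived] by blast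
    have "vec.span {z} \<subseteq> lie_center br"
      using z subspace_lie_center by (simp add: vec.span_minimal)
    then have "lie_ideal br (vec.span {z})"
      by (rule lie_ideal_if_subset_lie_center[OF vec.subspace_span])
    moreover have "lie_ideal br H"
      using H(1,2) by (rule lie_ideal_if_lie_derived_subset)
    moreover have "vec.span {z} \<noteq> {0}"
      using \<open>z \<noteq> 0\<close> vec.span_base[of z "{z}"] by blast
    moreover have "H \<noteq> {0}"
      using H(2) assms(1) vec.subspace_0[OF subspace_lie_derived] by blast
    ultimately show False
      using H(3,4) assms(2) unfolding lie_decomposable_def by blast
  qed
qed

lemma brackets_in_span_of_few:
  assumes "finite W"
  obtains T where "finite T" "2 * card T \<le> card W * (card W - 1)"
    "{br a b | a b. a \<in> W \<and> b \<in> W} \<subseteq> vec.span T"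
proof -
  have "\<exists>T. finite T \<and> 2 * card T \<le> card W * (card W - 1) \<and>
      {br a b | a b. a \<in> W \<and> b \<in> W} \<subseteq> vec.span T"
    using assms
  proof (induction W rule: finite_induct)
    case empty
    show ?case
      by auto
  next
    case (insert w W)
    then obtain T where T: "finite T" "2 * card T \<le> card W * (card W - 1)"
        "{br a b | a b. a \<in> W \<and> b \<in> W} \<subseteq> vec.span T"
      by blast
    let ?T' = "T \<union> br w ` W"
    have "finite ?T'"
      using T(1) insert(1) by blast
    moreover have "2 * card ?T' \<le> card (insert w W) * (card (insert w W) - 1)"
    proof -
      have "card ?T' \<le> card T + card W"
        using card_Un_le[of T "br w ` W"] card_image_le[OF insert(1), of "br w"] by linarith
      with T(2) show ?thesis
        using insert(1,2) by (cases "card W") (auto simp: algebra_simps)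
    qed
    moreover have "br a b \<in> vec.span ?T'" if a: "a \<in> insert w W" and b: "b \<in> insert w W" for a b
    proof -
      have w_left: "br w c \<in> vec.span ?T'" if "c \<in> insert w W" for c
        using that by (auto intro: vec.span_base vec.span_zero)
      show ?thesis
      proof (cases "a = w")
        case True
        then show ?thesis
          using w_left b by simp
      next
        case False
        with a have "a \<in> W"
          by simp
        show ?thesis
        proof (cases "b = w")
          case True
          then have "br a b = - br w a"
            by (simp add: bracket_antisym[of a w])
          then show ?thesis
            using w_left[of a] \<open>a \<in> W\<close> vec.span_neg by simp
        next
          case False
          with b \<open>a \<in> W\<close> T(3) have "br a b \<in> vec.span T"
            by blast
          then show ?thesis
            using vec.span_mono[of T ?T'] by blast
        qed
      qed
    qed
    ultimately show ?case
      by blast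
  qed
  with that show ?thesis
    by blast
qed

lemma lie_derived_subset_span_brackets:
  assumes "vec.span (W \<union> lie_center br) = UNIV"
  shows "lie_derived br \<subseteq> vec.span {br a b | a b. a \<in> W \<and> b \<in> W}"
  unfolding lie_derived_def
proof (rule vec.span_minimal[OF _ vec.subspace_span], safe)
  fix x y
  have "vec.span (lie_center br) = lie_center br"
    using subspace_lie_center by (rule vec.span_eq_iff[THEN iffD2])
  then obtain x1 x2 y1 y2 where
    "x = x1 + x2" "y = y1 + y2" "x1 \<in> vec.span W" "y1 \<in> vec.span W"
    "x2 \<in> lie_center br" "y2 \<in> lie_center br"
    using assms unfolding vec.span_Un by blast
  then have "br x y = br x1 y1"
    by (simp add: bracket_add_left bracket_add_right lie_center_bracket_left lie_center_bracket_right)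
  also have "\<dots> \<in> vec.span {br a b | a b. a \<in> W \<and> b \<in> W}"
    using \<open>x1 \<in> vec.span W\<close> \<open>y1 \<in> vec.span W\<close> by (rule bracket_in_span_brackets)
  finally show "br x y \<in> vec.span {br a b | a b. a \<in> W \<and> b \<in> W}" .
qed

lemma dim_lie_derived_le:
  defines "q \<equiv> CARD('n) - vec.dim (lie_center br)"
  shows "2 * vec.dim (lie_derived br) \<le> q * (q - 1)"
proof -
  obtain W where W: "finite W" "card W = q" "vec.span (W \<union> lie_center br) = UNIV"
    using vec.obtain_spanning_complement[OF subspace_lie_center] unfolding q_def vec_dim_card .
  obtain T where T: "finite T" "2 * card T \<le> q * (q - 1)"
      "{br a b | a b. a \<in> W \<and> b \<in> W} \<subseteq> vec.span T"
    using brackets_in_span_of_few[OF W(1)] unfolding W(2) .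
  have "lie_derived br \<subseteq> vec.span T"
    using lie_derived_subset_span_brackets[OF W(3)] vec.span_minimal[OF T(3) vec.subspace_span]
    by blast
  then have "vec.dim (lie_derived br) \<le> card T"
    using T(1) by (rule vec.dim_le_card)
  with T(2) show ?thesis
    by linarith
qed

end

(* With n = p + q, the hypothesis reads 2n + 1/4 <= (q + 1/2)^2. *)
lemma le_add_half_minus_sqrt_if_le_triangular:
  fixes p q :: nat
  assumes "2 * p \<le> q * (q - 1)"
  shows "real p \<le> real (p + q) + 1/2 - sqrt (2 * real (p + q) + 1/4)"
proof -
  have "2 * real p \<le> real q * real q - real q"
    using assms of_nat_mono[OF assms] by (cases q) (auto simp: algebra_simps)
  then have "sqrt (2 * real (p + q) + 1/4) \<le> sqrt ((real q + 1/2)\<^sup>2)"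
    by (intro real_sqrt_le_mono) (simp add: power2_eq_square algebra_simps)
  also have "\<dots> = real q + 1/2"
    by simp
  finally show ?thesis
    by simp
qed

theorem proposition2:
  fixes br :: "complex^'n \<Rightarrow> complex^'n \<Rightarrow> complex^'n"
  assumes "two_step_nilpotent br"
    and "\<not> lie_decomposable br"
  shows "1 \<le> vec.dim (lie_center br) \<and>
         real (vec.dim (lie_center br)) \<le> real CARD('n) + 1/2 - sqrt (2 * real CARD('n) + 1/4)"
proof -
  interpret complex_lie_algebra br
    using assms(1) unfolding two_step_nilpotent_def by unfold_locales blast
  have "lie_derived br \<noteq> {0}"
    using assms(1) bracket_in_lie_derived unfolding two_step_nilpotent_def by blast
  moreover have "lie_derived br \<subseteq> lie_center br"
    using assms(1) unfolding two_step_nilpotent_def by (intro lie_derived_subset_lie_center) blast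
  ultimately have center_eq: "lie_center br = lie_derived br"
    using lie_center_subset_lie_derived_if_indecomposable assms(2) by blast
  define p where "p = vec.dim (lie_center br)"
  define q where "q = CARD('n) - p"
  have "\<not> lie_center br \<subseteq> {0}"
    using \<open>lie_derived br \<noteq> {0}\<close> vec.subspace_0[OF subspace_lie_derived]
    unfolding center_eq by blast
  then have "p \<noteq> 0"
    unfolding p_def by simp
  then have "1 \<le> p"
    by simp
  moreover have "p + q = CARD('n)"
    using vec.dim_subset[of "lie_center br" UNIV] unfolding p_def q_def vec_dim_card by simp
  moreover have "2 * p \<le> q * (q - 1)"
    using dim_lie_derived_le unfolding p_def q_def center_eq .
  ultimately show ?thesis
    using le_add_half_minus_sqrt_if_le_triangular[of p q] unfolding p_def by simp
qed

end
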